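(* Let $S$ be a numerical semigroup with multiplicity $e$ and minimal generators $e<a_1<\dots<a_t$, and let $0\le i<e$. Then ${\rm d}_{\max}(S_i)=\max_{u\in{\rm adj}(S_i)}|\mathcal R(u)|$, where ${\rm d}_{\max}(S_i)=\max_{s\in S_i}{\rm d}_{\max}(s;S)$.
   Context: A numerical semigroup is a submonoid of $(\mathbb N,+)$ with finite complement. An $S$-factorization of $n\in S$ is $(c_0,\dots,c_t)\in\mathbb N^{t+1}$ with $c_0e+\sum c_ia_i=n$, of length $\sum c_i$. ${\rm ord}(n;S)$ is the maximal such length, and ${\rm d}_{\max}(n;S)$ is the number of $S$-factorizations of $n$ of length ${\rm ord}(n;S)$. Let $d_i=a_i-e$, $B=\langle e,d_1,\dots,d_t\rangle$, $\mathcal D=(e,d_1,\dots,d_t)$. A $B^{\mathcal D}$-factorization of $b\in B$ is $(x_0,\dots,x_t)\in\mathbb N^{t+1}$ with $x_0e+\sum x_id_i=b$, of length $\sum x_i$. $\min{\rm ord}(b;B^{\mathcal D})$ is the minimal such length, and $\mathcal P(b)$ is the set of all of them. Put ${\rm adj}(s)=s-{\rm ord}(s;S)e$ and $S_i=\{s\in S:s\equiv i\pmod e\}$. Write ${\rm adj}(S_i)=\{{\rm adj}(s):s\in S_i\}=\{u_0<u_1<\cdots\}$. Define $\mathcal R(u_0)=\mathcal P(u_0)$ and, for $j>0$, $\mathcal R(u_j)=\{\mathbf x\in\mathcal P(u_j):|\mathbf x|<\min{\rm ord}(u_{j-1};B^{\mathcal D})-\frac{u_j-u_{j-1}}{e}\}$.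 *)

theory Defs
  imports Complex_Main
begin

definition numerical_semigroup :: "nat set \<Rightarrow> bool" where
  "numerical_semigroup S \<longleftrightarrow> 0 \<in> S \<and> (\<forall>x\<in>S. \<forall>y\<in>S. x + y \<in> S) \<and> finite (UNIV - S)"

definition multiplicity :: "nat set \<Rightarrow> nat" where
  "multiplicity S = (LEAST n. n \<in> S \<and> 0 < n)"

definition minimal_generators :: "nat set \<Rightarrow> nat set" where
  "minimal_generators S = {s \<in> S. s \<noteq> 0 \<and>
      \<not> (\<exists>x\<in>S. \<exists>y\<in>S. x \<noteq> 0 \<and> y \<noteq> 0 \<and> x + y = s)}"

definition facts :: "nat list \<Rightarrow> nat \<Rightarrow> nat list set" where
  "facts w n = {c. length c = length w \<and> (\<Sum>j<length w. c ! j * w ! j) = n}"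

definition ordS :: "nat list \<Rightarrow> nat \<Rightarrow> nat" where
  "ordS w n = Max (sum_list ` facts w n)"

definition dmax :: "nat list \<Rightarrow> nat \<Rightarrow> nat" where
  "dmax w n = card {c \<in> facts w n. sum_list c = ordS w n}"

definition minord :: "nat list \<Rightarrow> nat \<Rightarrow> nat" where
  "minord w b = Min (sum_list ` facts w b)"

definition Dlist :: "nat \<Rightarrow> nat list \<Rightarrow> nat list" where
  "Dlist e as = e # map (\<lambda>a. a - e) as"

definition adj :: "nat \<Rightarrow> nat list \<Rightarrow> nat \<Rightarrow> nat" where
  "adj e as s = s - ordS (e # as) s * e"

definition Sclass :: "nat set \<Rightarrow> nat \<Rightarrow> nat \<Rightarrow> nat set" where
  "Sclass S e i = {s \<in> S. s mod e = i}"

definition adjSet :: "nat set \<Rightarrow> nat \<Rightarrow> nat list \<Rightarrow> nat \<Rightarrow> nat set" where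
  "adjSet S e as i = adj e as ` Sclass S e i"

definition Rset :: "nat set \<Rightarrow> nat \<Rightarrow> nat list \<Rightarrow> nat \<Rightarrow> nat \<Rightarrow> nat list set" where
  "Rset S e as i u =
    (let A = adjSet S e as i in
     if u = Min A then facts (Dlist e as) u
     else (let u' = Max {v \<in> A. v < u} in
       {x \<in> facts (Dlist e as) u.
          real (sum_list x) < real (minord (Dlist e as) u') - (real u - real u') / real e}))"

definition dmax_class :: "nat set \<Rightarrow> nat \<Rightarrow> nat list \<Rightarrow> nat \<Rightarrow> nat" where
  "dmax_class S e as i = Max ((\<lambda>s. dmax (e # as) s) ` Sclass S e i)"

end

theory Submission
  imports Defs
begin

text \<open>Every \<open>s \<in> S\<close> satisfies \<open>s = adj(s) + ord(s) e\<close>, and deleting the coefficient of \<open>e\<close>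
  turns the factorizations of \<open>s\<close> of maximal length bijectively into the \<open>B\<^sup>D\<close>-factorizations
  of \<open>adj(s)\<close> of length at most \<open>ord(s)\<close>; none of the latter can use \<open>e\<close>. Enumerating
  \<open>S\<^sub>i\<close> as \<open>s\<^sub>k = s\<^sub>0 + k e\<close>, the sequence \<open>adj(s\<^sub>k)\<close> is non-increasing and \<open>ord(s\<^sub>k)\<close>
  strictly increasing, so for fixed \<open>u \<in> adj(S\<^sub>i)\<close> the count \<open>dmax(s\<^sub>k)\<close> is largest at the
  last \<open>k\<close> with \<open>adj(s\<^sub>k) = u\<close>. For \<open>u = u\<^sub>0\<close> the length bound is then vacuous; otherwise the
  predecessor of \<open>u\<close> is \<open>u' = adj(s\<^bsub>k+1\<^esub>)\<close>, its minimal \<open>B\<^sup>D\<close>-length is \<open>ord(s\<^bsub>k+1\<^esub>)\<close>, and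
  \<open>ord(s\<^sub>k) + 1 = min ord(u') - (u - u')/e\<close>, so the count is \<open>|R(u)|\<close>.\<close>

fun dotp :: "nat list \<Rightarrow> nat list \<Rightarrow> nat" where
  "dotp (x # xs) (w # ws) = x * w + dotp xs ws"
| "dotp _ _ = 0"

lemma sum_nth_mult_eq_dotp:
  "length c = length w \<Longrightarrow> (\<Sum>j<length w. c ! j * w ! j) = dotp c w"
  by (induction w arbitrary: c)
     (auto simp: length_Suc_conv sum.lessThan_Suc_shift simp del: sum.lessThan_Suc)

lemma facts_eq: "facts w n = {c. length c = length w \<and> dotp c w = n}"
  using sum_nth_mult_eq_dotp by (auto simp: facts_def)

lemma facts_Cons_iff:
  "c \<in> facts (w # ws) n \<longleftrightarrow>
     (\<exists>c0 cs. c = c0 # cs \<and> length cs = length ws \<and> c0 * w + dotp cs ws = n)"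
  by (auto simp: facts_eq length_Suc_conv)

lemma dotp_map2_plus:
  "length x = length w \<Longrightarrow> length y = length w \<Longrightarrow>
     dotp (map2 (+) x y) w = dotp x w + dotp y w"
  by (induction w arbitrary: x y) (auto simp: length_Suc_conv algebra_simps)

lemma dotp_replicate_0: "dotp (replicate n 0) w = 0"
proof (induction n arbitrary: w)
  case (Suc n)
  then show ?case by (cases w) simp_all
qed simp

lemma dotp_map_minus:
  assumes "length c = length w" and "\<forall>a\<in>set w. e \<le> a"
  shows "dotp c w = dotp c (map (\<lambda>a. a - e) w) + sum_list c * e"
  using assms
proof (induction w arbitrary: c)
  case (Cons a w)
  then obtain c0 c' where c: "c = c0 # c'" "length c' = length w"
    by (auto simp: length_Suc_conv)
  have "c0 * a = c0 * (a - e) + c0 * e"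
    using Cons.prems by (simp add: diff_mult_distrib2)
  moreover have "dotp c' w = dotp c' (map (\<lambda>a. a - e) w) + sum_list c' * e"
    using Cons c by simp
  ultimately show ?case
    unfolding c by (simp add: algebra_simps)
qed simp

lemma sum_list_le_dotp:
  "length c = length w \<Longrightarrow> \<forall>a\<in>set w. 0 < a \<Longrightarrow> sum_list c \<le> dotp c w"
proof (induction w arbitrary: c)
  case (Cons a w)
  then obtain c0 c' where c: "c = c0 # c'" "length c' = length w"
    by (auto simp: length_Suc_conv)
  have "c0 \<le> c0 * a" using Cons.prems by simp
  with Cons c show ?case by (simp add: add_le_mono)
qed simp

lemma finite_facts:
  assumes "\<forall>a\<in>set w. 0 < a"
  shows "finite (facts w n)"
proof -
  have "facts w n \<subseteq> {c. set c \<subseteq> {0..n} \<and> length c = length w}"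
    using sum_list_le_dotp[OF _ assms] member_le_sum_list
    by (fastforce simp: facts_eq intro: order_trans)
  then show ?thesis using finite_lists_length_eq[of "{0..n}"] finite_subset by blast
qed

lemma dotp_unit_vector: "a \<in> set w \<Longrightarrow> \<exists>c. length c = length w \<and> dotp c w = a"
proof (induction w)
  case (Cons b w)
  show ?case
  proof (cases "a = b")
    case True
    then show ?thesis by (intro exI[of _ "1 # replicate (length w) 0"]) (simp add: dotp_replicate_0)
  next
    case False
    with Cons obtain c where "length c = length w" "dotp c w = a" by auto
    then show ?thesis by (intro exI[of _ "0 # c"]) simp
  qed
qed simp

lemma Max_range_eq_Max_fibrewise:
  fixes f :: "'a \<Rightarrow> nat" and g :: "'a \<Rightarrow> 'b" and h :: "'b \<Rightarrow> nat"
  assumes "finite (range g)"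
    and "\<And>u. u \<in> range g \<Longrightarrow> \<exists>k. g k = u \<and> h u = f k \<and> (\<forall>k'. g k' = u \<longrightarrow> f k' \<le> f k)"
  shows "Max (range f) = Max (h ` range g)"
proof -
  have "h ` range g \<subseteq> range f"
    using assms(2) by (metis image_subsetI rangeI)
  moreover have "f k \<le> Max (h ` range g)" for k
    using assms(2)[of "g k"] assms(1) by (metis Max_ge finite_imageI image_eqI rangeI order_trans)
  ultimately show ?thesis
    by (intro antisym Max_mono Max.boundedI) (auto intro: finite_subset[of _ "{..Max (h ` range g)}"])
qed

lemma antimono_last_index:
  fixes f :: "nat \<Rightarrow> 'a::linorder"
  assumes f: "antimono f" and "f k0 = u" and "f k1 < u"
  shows "\<exists>k. f k = u \<and> f (Suc k) < u"
proof -
  define n where "n = (LEAST n. f n < u)"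
  have n: "f n < u"
    unfolding n_def using assms(3) by (rule LeastI)
  have n_least: "n \<le> m" if "f m < u" for m
    unfolding n_def using that by (rule Least_le)
  have "k0 < n"
  proof (rule ccontr)
    assume "\<not> k0 < n"
    then have "f k0 \<le> f n"
      using antimonoD[OF f] by simp
    with n assms(2) show False by simp
  qed
  then obtain k where k: "n = Suc k" "k0 \<le> k"
    by (cases n) auto
  have "f k \<le> u"
    using antimonoD[OF f k(2)] assms(2) by simp
  moreover have "\<not> f k < u"
    using n_least[of k] k(1) by auto
  ultimately have "f k = u"
    by simp
  with n k show ?thesis by blast
qed

locale generated_numerical_semigroup =
  fixes S :: "nat set" and e :: nat and as :: "nat list"
  assumes numerical: "numerical_semigroup S"
    and sorted: "sorted_wrt (<) (e # as)"
    and generators: "set (e # as) = minimal_generators S"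
begin

abbreviation ord :: "nat \<Rightarrow> nat" where "ord \<equiv> ordS (e # as)"
abbreviation D :: "nat list" where "D \<equiv> Dlist e as"
abbreviation ds :: "nat list" where "ds \<equiv> map (\<lambda>a. a - e) as"

lemma D_eq: "D = e # ds"
  by (simp add: Dlist_def)

lemma e_pos: "0 < e"
  using generators by (auto simp: minimal_generators_def)

lemma less_generator: "a \<in> set as \<Longrightarrow> e < a"
  using sorted by simp

lemma generators_in: "set (e # as) \<subseteq> S"
  using generators by (auto simp: minimal_generators_def)

lemma zero_in: "0 \<in> S"
  using numerical by (simp add: numerical_semigroup_def)

lemma add_in: "x \<in> S \<Longrightarrow> y \<in> S \<Longrightarrow> x + y \<in> S"
  using numerical by (simp add: numerical_semigroup_def)

lemma mult_in: "x \<in> S \<Longrightarrow> k * x \<in> S"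
  by (induction k) (auto simp: zero_in add_in)

lemma dotp_in: "length c = length w \<Longrightarrow> set w \<subseteq> S \<Longrightarrow> dotp c w \<in> S"
  by (induction w arbitrary: c) (auto simp: length_Suc_conv zero_in intro!: add_in mult_in)

lemma finite_facts_generators: "finite (facts (e # as) n)"
  using e_pos less_generator by (intro finite_facts) (auto intro: less_trans)

lemma finite_facts_D: "finite (facts D n)"
  using e_pos less_generator by (intro finite_facts) (auto simp: D_eq)

lemma dotp_generators_eq:
  "length c = length as \<Longrightarrow> dotp c as = dotp c ds + sum_list c * e"
  using less_generator by (intro dotp_map_minus) (auto intro: less_imp_le)

lemma facts_generators_nonempty:
  assumes "s \<in> S"
  shows "facts (e # as) s \<noteq> {}"
  using assms
proof (induction s rule: less_induct)
  case (less s)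
  consider "s = 0" | "s \<in> minimal_generators S"
    | x y where "x \<in> S" "y \<in> S" "0 < x" "0 < y" "x + y = s"
    using less.prems by (auto simp: minimal_generators_def)
  then show ?case
  proof cases
    case 1
    then have "replicate (Suc (length as)) 0 \<in> facts (e # as) s"
      by (simp add: facts_eq dotp_replicate_0 del: replicate_Suc)
    then show ?thesis by blast
  next
    case 2
    then obtain c where "length c = length (e # as)" "dotp c (e # as) = s"
      using generators dotp_unit_vector by blast
    then show ?thesis by (auto simp: facts_eq)
  next
    case 3
    then obtain c d where "c \<in> facts (e # as) x" "d \<in> facts (e # as) y"
      using less.IH by (metis all_not_in_conv less_add_same_cancel1 less_add_same_cancel2)
    then have "map2 (+) c d \<in> facts (e # as) s"
      using 3 by (simp add: facts_eq dotp_map2_plus)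
    then show ?thesis by blast
  qed
qed

lemma ord_attained:
  assumes "s \<in> S"
  shows "\<exists>c\<in>facts (e # as) s. sum_list c = ord s"
proof -
  have "ord s \<in> sum_list ` facts (e # as) s"
    unfolding ordS_def using facts_generators_nonempty[OF assms]
    by (intro Max_in finite_imageI finite_facts_generators) simp
  then show ?thesis by (auto simp del: sum_list.Cons)
qed

lemma sum_list_le_ord: "c \<in> facts (e # as) s \<Longrightarrow> sum_list c \<le> ord s"
  unfolding ordS_def by (intro Max_ge finite_imageI finite_facts_generators imageI)

lemma maximal_fact_decomp:
  assumes "s \<in> S"
  obtains c0 cs where "length cs = length as" "c0 + sum_list cs = ord s"
    "ord s * e + dotp cs ds = s"
proof -
  obtain c where "c \<in> facts (e # as) s" and ord_c: "sum_list c = ord s"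
    using ord_attained[OF assms] by blast
  then obtain c0 cs where c: "c = c0 # cs"
    and cs: "length cs = length as" "c0 * e + dotp cs as = s"
    by (auto simp: facts_Cons_iff)
  have ord: "c0 + sum_list cs = ord s"
    using ord_c c by simp
  have "ord s * e + dotp cs ds = s"
    unfolding ord[symmetric] using cs dotp_generators_eq[OF cs(1)] by (simp add: algebra_simps)
  with cs ord show ?thesis
    using that by blast
qed

lemma adj_add_ord: "s \<in> S \<Longrightarrow> s = adj e as s + ord s * e"
  by (elim maximal_fact_decomp) (simp add: adj_def)

lemma short_fact_of_adj:
  assumes "s \<in> S"
  shows "\<exists>x\<in>facts D (adj e as s). sum_list x \<le> ord s"
proof -
  obtain c0 cs where cs: "length cs = length as" "c0 + sum_list cs = ord s"
    and s_eq: "ord s * e + dotp cs ds = s"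
    using maximal_fact_decomp[OF assms] .
  have "dotp cs ds = adj e as s"
    unfolding adj_def using s_eq by linarith
  with cs have "0 # cs \<in> facts D (adj e as s)" "sum_list (0 # cs) \<le> ord s"
    by (simp_all add: D_eq facts_Cons_iff)
  then show ?thesis by blast
qed

lemma adj_dotp_le: "length c = length as \<Longrightarrow> adj e as (dotp c as) \<le> dotp c ds"
proof -
  assume c: "length c = length as"
  have "0 # c \<in> facts (e # as) (dotp c as)"
    using c by (simp add: facts_Cons_iff)
  then have "sum_list c * e \<le> ord (dotp c as) * e"
    using sum_list_le_ord[of "0 # c"] by simp
  then show ?thesis
    using dotp_generators_eq[OF c] unfolding adj_def by linarith
qed

lemma dmax_eq_card_facts_D:
  assumes s: "s \<in> S"
  shows "dmax (e # as) s = card {x \<in> facts D (adj e as s). hd x = 0 \<and> sum_list x \<le> ord s}"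
proof -
  define M where "M = {c \<in> facts (e # as) s. sum_list c = ord s}"
  have s_eq: "s = adj e as s + ord s * e"
    using adj_add_ord[OF s] .
  have "inj_on (\<lambda>c. 0 # tl c) M"
    by (rule inj_onI) (auto simp: M_def facts_Cons_iff)
  moreover have "(\<lambda>c. 0 # tl c) ` M = {x \<in> facts D (adj e as s). hd x = 0 \<and> sum_list x \<le> ord s}"
  proof (intro equalityI subsetI)
    fix y assume "y \<in> (\<lambda>c. 0 # tl c) ` M"
    then obtain c where c: "c \<in> facts (e # as) s" "sum_list c = ord s" "y = 0 # tl c"
      by (auto simp: M_def)
    then obtain c0 cs where c_eq: "c = c0 # cs" and cs: "length cs = length as"
      "c0 * e + dotp cs as = s"
      using facts_Cons_iff by blast
    then have y: "y = 0 # cs" and "c0 + sum_list cs = ord s"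
      using c by simp_all
    have "s = (c0 + sum_list cs) * e + dotp cs ds"
      using cs dotp_generators_eq[OF cs(1)] by (simp add: algebra_simps)
    then have "dotp cs ds = adj e as s"
      using s_eq \<open>c0 + sum_list cs = ord s\<close> by simp
    then show "y \<in> {x \<in> facts D (adj e as s). hd x = 0 \<and> sum_list x \<le> ord s}"
      using y cs \<open>c0 + sum_list cs = ord s\<close>
      by (auto simp: D_eq facts_Cons_iff)
  next
    fix y assume "y \<in> {x \<in> facts D (adj e as s). hd x = 0 \<and> sum_list x \<le> ord s}"
    then obtain cs where y: "y = 0 # cs" "length cs = length as"
      "dotp cs ds = adj e as s" "sum_list cs \<le> ord s"
      by (auto simp: D_eq facts_Cons_iff)
    have "sum_list cs * e \<le> ord s * e"
      using y(4) by simp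
    then have "(ord s - sum_list cs) * e + dotp cs as = s"
      using s_eq y(3) dotp_generators_eq[OF y(2)] unfolding diff_mult_distrib by linarith
    then have "(ord s - sum_list cs) # cs \<in> M"
      using y by (simp add: M_def facts_Cons_iff)
    then show "y \<in> (\<lambda>c. 0 # tl c) ` M"
      using y by force
  qed
  ultimately show ?thesis
    by (metis M_def card_image dmax_def)
qed

end

locale numerical_semigroup_residue = generated_numerical_semigroup +
  fixes i :: nat
  assumes i_less: "i < e"
begin

abbreviation A :: "nat set" where "A \<equiv> adjSet S e as i"

lemma class_nonempty: "\<exists>s. s \<in> S \<and> s mod e = i"
proof -
  have "finite (UNIV - S)"
    using numerical by (simp add: numerical_semigroup_def)
  then obtain N where N: "\<forall>n\<in>UNIV - S. n < N"
    unfolding finite_nat_set_iff_bounded by blast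
  have "N \<le> N * e + i"
    using e_pos by (simp add: trans_le_add1)
  then have "N * e + i \<in> S"
    using N by (metis DiffI UNIV_I leD)
  moreover have "(N * e + i) mod e = i"
    using i_less by simp
  ultimately show ?thesis by blast
qed

definition least_in_class :: nat where
  "least_in_class = (LEAST s. s \<in> S \<and> s mod e = i)"

definition elem :: "nat \<Rightarrow> nat" where
  "elem k = least_in_class + k * e"

definition adj_at :: "nat \<Rightarrow> nat" where
  "adj_at k = adj e as (elem k)"

definition ord_at :: "nat \<Rightarrow> nat" where
  "ord_at k = ord (elem k)"

lemma least_in_class: "least_in_class \<in> S" "least_in_class mod e = i"
  using LeastI_ex[OF class_nonempty] unfolding least_in_class_def by simp_all

lemma elem_in: "elem k \<in> S"
  unfolding elem_def using least_in_class(1) generators_in by (simp add: add_in mult_in)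

lemma Sclass_eq_range_elem: "Sclass S e i = range elem"
proof (intro equalityI subsetI)
  fix s assume "s \<in> Sclass S e i"
  then have s: "s \<in> S" "s mod e = i"
    by (auto simp: Sclass_def)
  then have le: "least_in_class \<le> s"
    unfolding least_in_class_def by (intro Least_le) simp
  then have "e dvd s - least_in_class"
    using mod_eq_dvd_iff_nat[OF le, of e] s(2) least_in_class(2) by simp
  then obtain k where "s - least_in_class = e * k" ..
  then have "s = elem k"
    using le unfolding elem_def by (metis le_add_diff_inverse mult.commute)
  then show "s \<in> range elem" by blast
next
  fix s assume "s \<in> range elem"
  then obtain k where k: "s = elem k" ..
  have "elem k mod e = i"
    using least_in_class(2) by (simp add: elem_def)
  with k elem_in show "s \<in> Sclass S e i"
    by (simp add: Sclass_def)
qed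

lemma elem_eq: "elem k = adj_at k + ord_at k * e"
  unfolding adj_at_def ord_at_def using adj_add_ord[OF elem_in] .

lemma ord_at_Suc: "ord_at k + 1 \<le> ord_at (Suc k)"
proof -
  obtain c where "c \<in> facts (e # as) (elem k)" and c_ord: "sum_list c = ord_at k"
    using ord_attained[OF elem_in] unfolding ord_at_def by blast
  then obtain c0 cs where c: "c = c0 # cs" "length cs = length as" "c0 * e + dotp cs as = elem k"
    using facts_Cons_iff by blast
  have "elem (Suc k) = elem k + e"
    by (simp add: elem_def)
  with c have "Suc c0 # cs \<in> facts (e # as) (elem (Suc k))"
    by (simp add: facts_Cons_iff)
  from sum_list_le_ord[OF this] show ?thesis
    using c c_ord by (simp add: ord_at_def)
qed

lemma adj_ord_at_Suc: "adj_at (Suc k) + ord_at (Suc k) * e = adj_at k + (ord_at k + 1) * e"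
  using elem_eq[of k] elem_eq[of "Suc k"] by (simp add: elem_def)

lemma adj_at_Suc_le: "adj_at (Suc k) \<le> adj_at k"
  using adj_ord_at_Suc[of k] mult_le_mono1[OF ord_at_Suc[of k], of e] by linarith

lemma antimono_adj_at: "antimono adj_at"
  unfolding antimono_iff_le_Suc using adj_at_Suc_le by blast

lemma mono_ord_at: "mono ord_at"
  unfolding mono_iff_le_Suc using order_trans[OF le_add1 ord_at_Suc] by blast

lemma le_ord_at: "k \<le> ord_at k"
proof (induction k)
  case (Suc k)
  then show ?case using ord_at_Suc[of k] by simp
qed simp

lemma adjSet_eq_range: "A = range adj_at"
  unfolding adjSet_def Sclass_eq_range_elem adj_at_def by (simp add: image_comp comp_def)

lemma finite_adjSet: "finite A"
proof (rule finite_subset)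
  have "adj_at k \<le> adj_at 0" for k
    using antimonoD[OF antimono_adj_at, of 0 k] by simp
  then show "A \<subseteq> {..adj_at 0}"
    unfolding adjSet_eq_range by auto
qed simp

lemma Suc_le_if_adj_at_less: "adj_at m < adj_at k \<Longrightarrow> Suc k \<le> m"
  using antimonoD[OF antimono_adj_at, of m k] by (meson leD not_less_eq_eq)

lemma adj_at_mod: "adj_at k mod e = i"
proof -
  have "elem k mod e = i"
    using least_in_class by (simp add: elem_def)
  then show ?thesis
    by (simp add: elem_eq)
qed

text \<open>The part of a \<open>B\<^sup>D\<close>-factorization outside \<open>e\<close> lifts to an element of the class
  \<open>S\<^sub>i\<close>; this is how factorizations of different \<open>u \<in> adj(S\<^sub>i)\<close> are compared.\<close>
lemma elem_Suc_bound:
  assumes x: "x0 # xs \<in> facts D v" and v: "v mod e = i" "v < adj_at k + x0 * e"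
  shows "elem (Suc k) + x0 * e \<le> v + sum_list xs * e"
proof -
  have xs: "length xs = length as" "v = x0 * e + dotp xs ds"
    using x by (auto simp: D_eq facts_Cons_iff)
  have "dotp xs as \<in> S"
    using xs(1) generators_in by (intro dotp_in) auto
  moreover have "dotp xs as mod e = v mod e"
    using xs dotp_generators_eq[OF xs(1)] by simp
  ultimately have "dotp xs as \<in> Sclass S e i"
    using v(1) by (simp add: Sclass_def)
  then obtain m where m: "dotp xs as = elem m"
    unfolding Sclass_eq_range_elem by blast
  have "adj_at m < adj_at k"
    using adj_dotp_le[OF xs(1)] xs(2) v(2) unfolding adj_at_def m[symmetric] by linarith
  then have "Suc k \<le> m"
    by (rule Suc_le_if_adj_at_less)
  then have "elem (Suc k) \<le> elem m"
    unfolding elem_def by (metis add_le_mono1 mult_le_mono1 add.commute)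
  then show ?thesis
    using m xs dotp_generators_eq[OF xs(1)] by linarith
qed

lemma hd_eq_0_if_short:
  assumes x: "x \<in> facts D (adj_at k)" and short: "sum_list x \<le> ord_at k"
  shows "hd x = 0"
proof (rule ccontr)
  obtain x0 xs where x_eq: "x = x0 # xs"
    using x by (auto simp: D_eq facts_Cons_iff)
  assume "hd x \<noteq> 0"
  then have "adj_at k < adj_at k + x0 * e"
    using x_eq e_pos by simp
  then have "elem (Suc k) + x0 * e \<le> adj_at k + sum_list xs * e"
    using elem_Suc_bound x x_eq adj_at_mod by blast
  then have "(ord_at k + 1 + x0) * e \<le> sum_list xs * e"
    using elem_eq[of "Suc k"] adj_ord_at_Suc[of k] by (simp add: algebra_simps)
  then have "ord_at k + 1 + x0 \<le> sum_list xs"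
    using e_pos mult_le_cancel2 by blast
  with short x_eq show False
    by simp
qed

lemma dmax_elem_eq:
  "dmax (e # as) (elem k) = card {x \<in> facts D (adj_at k). sum_list x \<le> ord_at k}"
proof -
  have "{x \<in> facts D (adj_at k). hd x = 0 \<and> sum_list x \<le> ord_at k}
      = {x \<in> facts D (adj_at k). sum_list x \<le> ord_at k}"
    using hd_eq_0_if_short by blast
  then show ?thesis
    using dmax_eq_card_facts_D[OF elem_in, of k, folded adj_at_def ord_at_def] by simp
qed

lemma sum_list_le_of_facts_D: "x \<in> facts D u \<Longrightarrow> sum_list x \<le> u"
  using e_pos less_generator by (auto simp: facts_eq D_eq intro!: sum_list_le_dotp)

lemma adj_at_Min_stable: "\<exists>k\<ge>n. adj_at k = Min A"
proof -
  obtain k1 where k1: "adj_at k1 = Min A"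
    using Min_in[OF finite_adjSet] adjSet_eq_range by auto
  define k where "k = max k1 n"
  have "adj_at k \<le> adj_at k1"
    using antimonoD[OF antimono_adj_at] k_def by simp
  moreover have "Min A \<le> adj_at k"
    using finite_adjSet adjSet_eq_range by simp
  ultimately show ?thesis
    using k1 k_def by (intro exI[of _ k]) simp
qed

lemma card_Rset_Min:
  "\<exists>k. adj_at k = Min A \<and> card (Rset S e as i (Min A)) = dmax (e # as) (elem k)
     \<and> (\<forall>k'. adj_at k' = Min A \<longrightarrow> dmax (e # as) (elem k') \<le> dmax (e # as) (elem k))"
proof -
  obtain k where k: "k \<ge> Min A" "adj_at k = Min A"
    using adj_at_Min_stable by blast
  have "sum_list x \<le> ord_at k" if "x \<in> facts D (Min A)" for x
    using sum_list_le_of_facts_D[OF that] k(1) le_ord_at[of k] by linarith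
  then have "{x \<in> facts D (adj_at k). sum_list x \<le> ord_at k} = Rset S e as i (Min A)"
    using k(2) by (auto simp: Rset_def)
  moreover have "dmax (e # as) (elem k') \<le> card (Rset S e as i (Min A))"
    if "adj_at k' = Min A" for k'
    unfolding dmax_elem_eq using that by (intro card_mono) (auto simp: Rset_def finite_facts_D)
  ultimately show ?thesis
    using k(2) dmax_elem_eq by metis
qed

context
  fixes k :: nat
  assumes drop: "adj_at (Suc k) < adj_at k"
begin

lemma Max_adjSet_below: "Max {v \<in> A. v < adj_at k} = adj_at (Suc k)"
proof (rule Max_eqI)
  show "finite {v \<in> A. v < adj_at k}"
    using finite_adjSet by simp
  show "adj_at (Suc k) \<in> {v \<in> A. v < adj_at k}"
    using drop adjSet_eq_range by simp
  fix v assume "v \<in> {v \<in> A. v < adj_at k}"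
  then obtain m where "v = adj_at m" "adj_at m < adj_at k"
    using adjSet_eq_range by auto
  then show "v \<le> adj_at (Suc k)"
    using antimonoD[OF antimono_adj_at Suc_le_if_adj_at_less] by simp
qed

lemma minord_adj_at_Suc: "minord D (adj_at (Suc k)) = ord_at (Suc k)"
proof -
  have lower: "ord_at (Suc k) \<le> sum_list x" if x: "x \<in> facts D (adj_at (Suc k))" for x
  proof -
    obtain x0 xs where x_eq: "x = x0 # xs"
      using x by (auto simp: D_eq facts_Cons_iff)
    have "adj_at (Suc k) < adj_at k + x0 * e"
      using drop by simp
    then have "elem (Suc k) + x0 * e \<le> adj_at (Suc k) + sum_list xs * e"
      using elem_Suc_bound x x_eq adj_at_mod by blast
    then have "ord_at (Suc k) * e \<le> sum_list xs * e"
      using elem_eq[of "Suc k"] by linarith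
    then show ?thesis
      using e_pos x_eq mult_le_cancel2 by fastforce
  qed
  obtain x where "x \<in> facts D (adj_at (Suc k))" "sum_list x \<le> ord_at (Suc k)"
    using short_fact_of_adj[OF elem_in] unfolding adj_at_def ord_at_def by blast
  then have "ord_at (Suc k) \<in> sum_list ` facts D (adj_at (Suc k))"
    using lower by (metis antisym imageI)
  then show ?thesis
    unfolding minord_def using lower by (intro Min_eqI finite_imageI finite_facts_D) auto
qed

lemma Rset_adj_at_drop:
  "Rset S e as i (adj_at k) = {x \<in> facts D (adj_at k). sum_list x \<le> ord_at k}"
proof -
  have "Min A \<le> adj_at (Suc k)"
    using finite_adjSet adjSet_eq_range by simp
  then have not_Min: "adj_at k \<noteq> Min A"
    using drop by simp
  have "real (adj_at (Suc k) + ord_at (Suc k) * e) = real (adj_at k + (ord_at k + 1) * e)"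
    using adj_ord_at_Suc[of k] by (rule arg_cong)
  then have threshold: "real (ord_at (Suc k)) - (real (adj_at k) - real (adj_at (Suc k))) / real e
      = real (ord_at k) + 1"
    using e_pos by (simp add: field_simps)
  have "real n < real (ord_at k) + 1 \<longleftrightarrow> n \<le> ord_at k" for n
    by linarith
  then show ?thesis
    unfolding Rset_def Let_def
    using not_Min Max_adjSet_below minord_adj_at_Suc threshold by simp
qed

lemma card_Rset_adj_at_drop:
  "card (Rset S e as i (adj_at k)) = dmax (e # as) (elem k)
     \<and> (\<forall>k'. adj_at k' = adj_at k \<longrightarrow> dmax (e # as) (elem k') \<le> dmax (e # as) (elem k))"
proof (intro conjI allI impI)
  show "card (Rset S e as i (adj_at k)) = dmax (e # as) (elem k)"
    by (simp add: Rset_adj_at_drop dmax_elem_eq)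
  fix k' assume k': "adj_at k' = adj_at k"
  have "k' \<le> k"
  proof (rule ccontr)
    assume "\<not> k' \<le> k"
    then have "adj_at k' \<le> adj_at (Suc k)"
      using antimonoD[OF antimono_adj_at] by simp
    with drop k' show False by simp
  qed
  then have "ord_at k' \<le> ord_at k"
    using monoD[OF mono_ord_at] by blast
  then show "dmax (e # as) (elem k') \<le> dmax (e # as) (elem k)"
    unfolding dmax_elem_eq k' by (intro card_mono) (auto simp: finite_facts_D)
qed

end

lemma dmax_class_eq: "dmax_class S e as i = Max ((\<lambda>u. card (Rset S e as i u)) ` A)"
proof -
  have "dmax_class S e as i = Max (range (\<lambda>k. dmax (e # as) (elem k)))"
    unfolding dmax_class_def Sclass_eq_range_elem by (simp add: image_comp comp_def)
  also have "\<dots> = Max ((\<lambda>u. card (Rset S e as i u)) ` range adj_at)"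
  proof (rule Max_range_eq_Max_fibrewise)
    show "finite (range adj_at)"
      using finite_adjSet adjSet_eq_range by simp
    fix u assume u: "u \<in> range adj_at"
    show "\<exists>k. adj_at k = u \<and> card (Rset S e as i u) = dmax (e # as) (elem k)
      \<and> (\<forall>k'. adj_at k' = u \<longrightarrow> dmax (e # as) (elem k') \<le> dmax (e # as) (elem k))"
    proof (cases "u = Min A")
      case True
      then show ?thesis using card_Rset_Min by blast
    next
      case False
      obtain k0 where "adj_at k0 = u"
        using u by blast
      moreover obtain k1 where "adj_at k1 = Min A"
        using Min_in[OF finite_adjSet] adjSet_eq_range by auto
      moreover have "Min A < u"
        using False u finite_adjSet adjSet_eq_range by (simp add: order.not_eq_order_implies_strict)
      ultimately obtain k where "adj_at k = u" "adj_at (Suc k) < u"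
        using antimono_last_index[OF antimono_adj_at] by metis
      then show ?thesis
        using card_Rset_adj_at_drop[of k] by blast
    qed
  qed
  finally show ?thesis
    using adjSet_eq_range by simp
qed

end

theorem corollary3p10:
  fixes S :: "nat set" and e i :: nat and as :: "nat list"
  assumes "numerical_semigroup S"
    and "e = multiplicity S"
    and "sorted_wrt (<) (e # as)"
    and "set (e # as) = minimal_generators S"
    and "i < e"
  shows "dmax_class S e as i = Max ((\<lambda>u. card (Rset S e as i u)) ` adjSet S e as i)"
proof -
  interpret numerical_semigroup_residue S e as i
    by unfold_locales (use assms in auto)
  show ?thesis
    by (rule dmax_class_eq)
qed

end
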